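(* The Koszul dual operad of the operad of differential dendriform algebras of weight zero is the operad of diassociative algebras $(D,\dashv,\vdash)$ equipped with one linear operator $\partial:D\to D$ lying in the centroid and satisfying $\partial^2=0$, i.e. $\partial(a\ast b)=\partial(a)\ast b=a\ast\partial(b)$ for all $a,b\in D$ and $\ast\in\{\dashv,\vdash\}$, and $\partial\circ\partial=0$.
   Context: $\mathbf{k}$ is a commutative unital ring (a field for Koszul duality). The operad of differential dendriform algebras of weight zero is the (nonsymmetric, quadratic) operad generated by two binary operations $\prec,\succ$ and one unary operation $d$, subject to the dendriform relations $(a\prec b)\prec c=a\prec(b\prec c+b\succ c)$, $(a\succ b)\prec c=a\succ(b\prec c)$, $(a\prec b+a\succ b)\succ c=a\succ(b\succ c)$ and the Leibniz relations $d(a\prec b)=d(a)\prec b+a\prec d(b)$, $d(a\succ b)=d(a)\succ b+a\succ d(b)$. Koszul duality of operads is in the sense of Ginzburg–Kapranov/Loday–Vallette. A diassociative algebra is a $\mathbf{k}$-module $D$ with bilinear operations $\dashv,\vdash$ such that for all $a,b,c$: $(a\dashv b)\dashv c=a\dashv(b\dashv c)$, $(a\dashv b)\dashv c=a\dashv(b\vdash c)$, $(a\vdash b)\dashv c=a\vdash(b\dashv c)$, $(a\dashv b)\vdash c=a\vdash(b\vdash c)$, $(a\vdash b)\vdash c=a\vdash(b\vdash c)$. *)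

theory Defs
  imports Main "HOL-Library.Function_Algebras"
begin

text \<open>Nonsymmetric quadratic operads generated by one unary operation and two binary
operations.  The binary generators are indexed by \<open>bop\<close>; the unary generator is
implicit.  For the dendriform side: Lt = prec, Rt = succ, unary = d.  For the dual
side (dual basis): Lt = dashv, Rt = vdash, unary = partial.\<close>

datatype bop = Lt | Rt

text \<open>Basis of the weight-2 part T(E)^(2) of the free ns operad on E:
  DD       = d o d                        (arity 1)
  DB m     = d o m          : d(a m b)     (arity 2)
  BD1 m    = m o_1 d        : (d a) m b    (arity 2)
  BD2 m    = m o_2 d        : a m (d b)    (arity 2)
  C1 m n   = m o_1 n        : (a n b) m c  (arity 3)
  C2 m n   = m o_2 n        : a m (b n c)  (arity 3)\<close>

datatype tree = DD | DB bop | BD1 bop | BD2 bop | C1 bop bop | C2 bop bop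

definition all_trees :: "tree list" where
  "all_trees = [DD, DB Lt, DB Rt, BD1 Lt, BD1 Rt, BD2 Lt, BD2 Rt,
     C1 Lt Lt, C1 Lt Rt, C1 Rt Lt, C1 Rt Rt, C2 Lt Lt, C2 Lt Rt, C2 Rt Lt, C2 Rt Rt]"

type_synonym 'k wt2 = "tree \<Rightarrow> 'k"

definition basis_vec :: "tree \<Rightarrow> 'k::field wt2" ("\<langle>_\<rangle>") where
  "\<langle>t\<rangle> = (\<lambda>s. if s = t then 1 else 0)"

definition span_list :: "'k::field wt2 list \<Rightarrow> 'k wt2 set" where
  "span_list vs = {(\<lambda>t. \<Sum>i<length vs. c i * (vs ! i) t) | c. True}"

text \<open>Sign of the Koszul-duality pairing on basis trees (ns convention of
Loday / Loday--Vallette, with the unary dual generator being suspended):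
+1 on compositions m o_1 n and d o m and d o d, -1 on m o_2 n and m o_i d.\<close>
definition kd_sign :: "tree \<Rightarrow> 'k::field" where
  "kd_sign t = (case t of C2 _ _ \<Rightarrow> -1 | BD1 _ \<Rightarrow> -1 | BD2 _ \<Rightarrow> -1 | _ \<Rightarrow> 1)"

definition kd_pairing :: "'k::field wt2 \<Rightarrow> 'k wt2 \<Rightarrow> 'k" where
  "kd_pairing x y = (\<Sum>t\<leftarrow>all_trees. kd_sign t * x t * y t)"

definition orth :: "'k::field wt2 set \<Rightarrow> 'k wt2 set" where
  "orth R = {y. \<forall>x\<in>R. kd_pairing x y = 0}"

definition diffdend_rels :: "'k::field wt2 list" where
  "diffdend_rels =
    [ \<langle>C1 Lt Lt\<rangle> - \<langle>C2 Lt Lt\<rangle> - \<langle>C2 Lt Rt\<rangle>,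
      \<langle>C1 Lt Rt\<rangle> - \<langle>C2 Rt Lt\<rangle>,
      \<langle>C1 Rt Lt\<rangle> + \<langle>C1 Rt Rt\<rangle> - \<langle>C2 Rt Rt\<rangle>,
      \<langle>DB Lt\<rangle> - \<langle>BD1 Lt\<rangle> - \<langle>BD2 Lt\<rangle>,
      \<langle>DB Rt\<rangle> - \<langle>BD1 Rt\<rangle> - \<langle>BD2 Rt\<rangle> ]"

definition koszul_dual_rels :: "'k::field wt2 list \<Rightarrow> 'k wt2 set" where
  "koszul_dual_rels R = orth (span_list R)"

definition dias_centroid_sq0_rels :: "'k::field wt2 list" where
  "dias_centroid_sq0_rels =
    [ \<langle>C1 Lt Lt\<rangle> - \<langle>C2 Lt Lt\<rangle>,
      \<langle>C1 Lt Lt\<rangle> - \<langle>C2 Lt Rt\<rangle>,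
      \<langle>C1 Lt Rt\<rangle> - \<langle>C2 Rt Lt\<rangle>,
      \<langle>C1 Rt Lt\<rangle> - \<langle>C2 Rt Rt\<rangle>,
      \<langle>C1 Rt Rt\<rangle> - \<langle>C2 Rt Rt\<rangle>,
      \<langle>DB Lt\<rangle> - \<langle>BD1 Lt\<rangle>, \<langle>DB Lt\<rangle> - \<langle>BD2 Lt\<rangle>,
      \<langle>DB Rt\<rangle> - \<langle>BD1 Rt\<rangle>, \<langle>DB Rt\<rangle> - \<langle>BD2 Rt\<rangle>,
      \<langle>DD\<rangle> ]"

end

theory Submission
  imports Defs
begin

text \<open>Each of the ten diassociative-centroid relations pairs to zero with each of the five
differential dendriform relations, so by bilinearity their span lies in the orthogonal complement.
Conversely, orthogonality to the five dendriform relations expresses the coordinates of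
\<open>C1 Lt Lt\<close>, \<open>C1 Lt Rt\<close>, \<open>C2 Rt Rt\<close>, \<open>DB Lt\<close>, \<open>DB Rt\<close> through the ten remaining ones, and these ten
free coordinates are, up to sign, the coefficients of the ten relations.\<close>

lemma kd_pairing_commute: "kd_pairing x y = kd_pairing y x"
  by (simp add: kd_pairing_def mult.commute mult.left_commute)

lemma kd_pairing_sum_left:
  "kd_pairing (\<lambda>t. \<Sum>i<n. c i * f i t) y = (\<Sum>i<n. c i * kd_pairing (f i) y)"
  by (simp add: kd_pairing_def all_trees_def sum_distrib_left sum_distrib_right
      sum.distrib algebra_simps)

lemma nth_mem_span_list: "k < length vs \<Longrightarrow> vs ! k \<in> span_list vs"
  unfolding span_list_def
proof (intro CollectI exI conjI TrueI ext)
  fix t assume "k < length vs"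
  then have "{..<length vs} \<inter> {i. i = k} = {k}"
    by auto
  then show "(vs ! k) t = (\<Sum>i<length vs. of_bool (i = k) * (vs ! i) t)"
    by simp
qed

lemma orth_span_list: "orth (span_list vs) = {y. \<forall>v\<in>set vs. kd_pairing v y = 0}"
proof (intro set_eqI iffI)
  fix y assume "y \<in> orth (span_list vs)"
  then show "y \<in> {y. \<forall>v\<in>set vs. kd_pairing v y = 0}"
    using nth_mem_span_list by (fastforce simp: orth_def in_set_conv_nth)
next
  fix y assume "y \<in> {y. \<forall>v\<in>set vs. kd_pairing v y = 0}"
  then have "kd_pairing (vs ! i) y = 0" if "i < length vs" for i
    using that by simp
  then show "y \<in> orth (span_list vs)"
    by (auto simp: orth_def span_list_def kd_pairing_sum_left)
qed

lemma span_list_subset_orth: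
  assumes "\<And>v w. v \<in> set vs \<Longrightarrow> w \<in> set ws \<Longrightarrow> kd_pairing v w = 0"
  shows "span_list ws \<subseteq> orth (span_list vs)"
proof
  fix y assume "y \<in> span_list ws"
  then obtain c where y: "y = (\<lambda>t. \<Sum>i<length ws. c i * (ws ! i) t)"
    unfolding span_list_def by blast
  have "kd_pairing v y = 0" if "v \<in> set vs" for v
  proof -
    have "kd_pairing v y = (\<Sum>i<length ws. c i * kd_pairing (ws ! i) v)"
      by (simp add: y kd_pairing_commute[of v] kd_pairing_sum_left)
    also have "\<dots> = 0"
      using assms[OF that] by (simp add: kd_pairing_commute[of _ v])
    finally show ?thesis .
  qed
  then show "y \<in> orth (span_list vs)"
    by (simp add: orth_span_list)
qed

lemma UNIV_tree: "UNIV = set all_trees"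
proof -
  have "t \<in> set all_trees" for t
    by (cases t) (simp_all add: all_trees_def; metis bop.exhaust)+
  then show ?thesis by blast
qed

lemma diffdend_rels_orth_dias_centroid_sq0_rels:
  "v \<in> set diffdend_rels \<Longrightarrow> w \<in> set dias_centroid_sq0_rels \<Longrightarrow> kd_pairing v w = 0"
  by (auto simp: diffdend_rels_def dias_centroid_sq0_rels_def kd_pairing_def all_trees_def
      kd_sign_def basis_vec_def)

lemma kd_pairing_diffdend_rels:
  "map (\<lambda>v. kd_pairing v y) diffdend_rels =
    [y (C1 Lt Lt) + y (C2 Lt Lt) + y (C2 Lt Rt),
     y (C1 Lt Rt) + y (C2 Rt Lt),
     y (C1 Rt Lt) + y (C1 Rt Rt) + y (C2 Rt Rt),
     y (DB Lt) + y (BD1 Lt) + y (BD2 Lt),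
     y (DB Rt) + y (BD1 Rt) + y (BD2 Rt)]"
  by (simp add: diffdend_rels_def kd_pairing_def all_trees_def kd_sign_def basis_vec_def
      algebra_simps)

lemma mem_koszul_dual_diffdend_rels_iff:
  fixes y :: "'k::field wt2"
  shows "y \<in> koszul_dual_rels diffdend_rels \<longleftrightarrow>
    y (C1 Lt Lt) = - y (C2 Lt Lt) - y (C2 Lt Rt) \<and>
    y (C1 Lt Rt) = - y (C2 Rt Lt) \<and>
    y (C2 Rt Rt) = - y (C1 Rt Lt) - y (C1 Rt Rt) \<and>
    y (DB Lt) = - y (BD1 Lt) - y (BD2 Lt) \<and>
    y (DB Rt) = - y (BD1 Rt) - y (BD2 Rt)"
  (is "_ \<longleftrightarrow> ?solved")
proof -
  have "y \<in> koszul_dual_rels diffdend_rels \<longleftrightarrow>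
      (\<forall>a\<in>set (map (\<lambda>v. kd_pairing v y) diffdend_rels). a = 0)"
    by (simp add: koszul_dual_rels_def orth_span_list)
  also have "\<dots> \<longleftrightarrow> ?solved"
    unfolding kd_pairing_diffdend_rels by (simp add: eq_diff_eq eq_neg_iff_add_eq_0 ac_simps)
  finally show ?thesis .
qed

lemma koszul_dual_diffdend_rels_subset_span:
  "koszul_dual_rels diffdend_rels \<subseteq> span_list (dias_centroid_sq0_rels :: 'k::field wt2 list)"
proof
  fix y :: "'k wt2"
  assume y: "y \<in> koszul_dual_rels diffdend_rels"
  define cs where "cs = [- y (C2 Lt Lt), - y (C2 Lt Rt), - y (C2 Rt Lt), y (C1 Rt Lt), y (C1 Rt Rt),
    - y (BD1 Lt), - y (BD2 Lt), - y (BD1 Rt), - y (BD2 Rt), y DD]"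
  have "y t = (\<Sum>i<length dias_centroid_sq0_rels. cs ! i * (dias_centroid_sq0_rels ! i) t)"
    for t
  proof -
    have "t \<in> set all_trees"
      by (simp add: UNIV_tree[symmetric])
    then show ?thesis
      using y[unfolded mem_koszul_dual_diffdend_rels_iff]
      by (auto simp: all_trees_def cs_def dias_centroid_sq0_rels_def basis_vec_def
          eval_nat_numeral)
  qed
  then show "y \<in> span_list dias_centroid_sq0_rels"
    unfolding span_list_def by blast
qed

theorem proposition3p23:
  shows "koszul_dual_rels (diffdend_rels :: 'k::field wt2 list)
           = span_list dias_centroid_sq0_rels"
proof
  show "koszul_dual_rels diffdend_rels \<subseteq> span_list dias_centroid_sq0_rels"
    by (rule koszul_dual_diffdend_rels_subset_span)
  show "span_list dias_centroid_sq0_rels \<subseteq> koszul_dual_rels diffdend_rels"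
    unfolding koszul_dual_rels_def
    by (rule span_list_subset_orth) (rule diffdend_rels_orth_dias_centroid_sq0_rels)
qed

end
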